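(* Let $n\ge3$, $1\le d\le n-2$, $D=\binom{n-1}{d}$. Let $H$ be the graph whose vertices are the labeled $d$-out-regular digraphs on $[n]$, two distinct digraphs being adjacent iff one is obtained from the other by changing the out-neighborhood of a single vertex, and let $m_G(G')=\frac1{n(D-1)+1}$ if $G'=G$ or $G'$ is adjacent to $G$, and $0$ otherwise. Then $\kappa(G_1,G_2)\ge\frac1n$ for all distinct $G_1,G_2\in V(H)$.
   Context: A directed graph here has no loops and no multiple arcs; it is $d$-out-regular if every vertex has out-degree $d$. For a graph $H$ with random walk $m$ (each $m_x$ a probability distribution supported on $x$ and its neighbors), $d_H$ the graph distance on $H$, the transportation distance is $W(m_1,m_2)=\inf_A\sum_{x,y}A(x,y)d_H(x,y)$ over couplings $A$ of $m_1,m_2$, and the Ollivier Ricci curvature is $\kappa(x,y)=1-W(m_x,m_y)/d_H(x,y)$. *)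

theory Defs
  imports Complex_Main
begin

text \<open>A labeled digraph on [n] = {0..<n} (no loops, no multiple arcs) is represented by
its out-neighbourhood function G :: nat \<Rightarrow> nat set, with G i \<subseteq> {0..<n} - {i}
for i < n and G i = {} for i \<ge> n (canonical representation).\<close>

definition out_regular_digraphs :: "nat \<Rightarrow> nat \<Rightarrow> (nat \<Rightarrow> nat set) set" where
  "out_regular_digraphs n d =
     {G. (\<forall>i<n. G i \<subseteq> {0..<n} - {i} \<and> card (G i) = d) \<and> (\<forall>i. n \<le> i \<longrightarrow> G i = {})}"

definition adjH :: "nat \<Rightarrow> nat \<Rightarrow> (nat \<Rightarrow> nat set) \<Rightarrow> (nat \<Rightarrow> nat set) \<Rightarrow> bool" where
  "adjH n d G G' \<longleftrightarrow> G \<in> out_regular_digraphs n d \<and> G' \<in> out_regular_digraphs n d \<and>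
     G \<noteq> G' \<and> (\<exists>v. \<forall>u. u \<noteq> v \<longrightarrow> G u = G' u)"

definition graph_dist :: "('a \<Rightarrow> 'a \<Rightarrow> bool) \<Rightarrow> 'a \<Rightarrow> 'a \<Rightarrow> nat" where
  "graph_dist adj x y = (LEAST k. (adj ^^ k) x y)"

definition walkH :: "nat \<Rightarrow> nat \<Rightarrow> (nat \<Rightarrow> nat set) \<Rightarrow> (nat \<Rightarrow> nat set) \<Rightarrow> real" where
  "walkH n d G G' =
     (if G \<in> out_regular_digraphs n d \<and> (G' = G \<or> adjH n d G G')
      then 1 / (real n * (real (n - 1 choose d) - 1) + 1) else 0)"

definition coupling :: "'a set \<Rightarrow> ('a \<Rightarrow> real) \<Rightarrow> ('a \<Rightarrow> real) \<Rightarrow> ('a \<Rightarrow> 'a \<Rightarrow> real) \<Rightarrow> bool" where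
  "coupling V m1 m2 A \<longleftrightarrow> (\<forall>x\<in>V. \<forall>y\<in>V. 0 \<le> A x y) \<and>
     (\<forall>x\<in>V. (\<Sum>y\<in>V. A x y) = m1 x) \<and> (\<forall>y\<in>V. (\<Sum>x\<in>V. A x y) = m2 y)"

definition transport_dist :: "'a set \<Rightarrow> ('a \<Rightarrow> 'a \<Rightarrow> real) \<Rightarrow> ('a \<Rightarrow> real) \<Rightarrow> ('a \<Rightarrow> real) \<Rightarrow> real" where
  "transport_dist V \<delta> m1 m2 =
     Inf {(\<Sum>x\<in>V. \<Sum>y\<in>V. A x y * \<delta> x y) | A. coupling V m1 m2 A}"

definition ollivier_ricci :: "'a set \<Rightarrow> ('a \<Rightarrow> 'a \<Rightarrow> bool) \<Rightarrow> ('a \<Rightarrow> 'a \<Rightarrow> real) \<Rightarrow> 'a \<Rightarrow> 'a \<Rightarrow> real" where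
  "ollivier_ricci V adj m x y =
     1 - transport_dist V (\<lambda>u v. real (graph_dist adj u v)) (m x) (m y) / real (graph_dist adj x y)"

end

theory Submission
  imports Defs
begin

(*
  A vertex of H is a function assigning to every j < n a d-subset of [n] - {j}, and two
  vertices are adjacent iff they differ in exactly one coordinate; so H is a Hamming graph, its distance is the Hamming distance, and m_G is the
  uniform distribution on the closed unit ball around G, of size n(D-1)+1.

  Let G1, G2 be at distance k >= 2. Couple m_G1 with m_G2 by sending G1 to G2, by matching the
  neighbour G1(j := s) (s different from G1 j and G2 j) with G2(j := s), which is at distance
  k or k-1, and by spreading each of the k neighbours G1(i := G2 i) uniformly over the k-1
  neighbours G2(j := G1 j) with j ~= i, which are at distance k-2. For k = 1 instead G1 and G2
  stay put. In both cases the cost is k(n-1)(D-1)/(n(D-1)+1) <= k(1 - 1/n).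
*)

section \<open>Transport plans\<close>

definition transport_cost :: "'a set \<Rightarrow> ('a \<Rightarrow> 'a \<Rightarrow> real) \<Rightarrow> ('a \<Rightarrow> 'a \<Rightarrow> real) \<Rightarrow> real" where
  "transport_cost V \<delta> A = (\<Sum>x\<in>V. \<Sum>y\<in>V. A x y * \<delta> x y)"

lemma transport_dist_le_cost:
  assumes "coupling V m1 m2 A" and "\<And>x y. x \<in> V \<Longrightarrow> y \<in> V \<Longrightarrow> 0 \<le> \<delta> x y"
  shows "transport_dist V \<delta> m1 m2 \<le> transport_cost V \<delta> A"
  unfolding transport_dist_def transport_cost_def
proof (rule cInf_lower)
  show "bdd_below {\<Sum>x\<in>V. \<Sum>y\<in>V. A x y * \<delta> x y |A. coupling V m1 m2 A}"
    using assms(2) by (intro bdd_belowI[of _ 0]) (auto simp: coupling_def intro!: sum_nonneg)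
qed (use assms(1) in blast)

lemma coupling_add:
  assumes "coupling V m1 m2 A" and "coupling V m1' m2' A'"
  shows "coupling V (\<lambda>x. m1 x + m1' x) (\<lambda>y. m2 y + m2' y) (\<lambda>x y. A x y + A' x y)"
  using assms by (simp add: coupling_def sum.distrib)

lemma coupling_scale:
  assumes "coupling V m1 m2 A" and "0 \<le> c"
  shows "coupling V (\<lambda>x. c * m1 x) (\<lambda>y. c * m2 y) (\<lambda>x y. c * A x y)"
  using assms by (simp add: coupling_def sum_distrib_left[symmetric])

lemma coupling_cong:
  assumes "coupling V m1 m2 A"
    and "\<And>x. x \<in> V \<Longrightarrow> m1 x = m1' x" and "\<And>y. y \<in> V \<Longrightarrow> m2 y = m2' y"
  shows "coupling V m1' m2' A"
  using assms by (simp add: coupling_def)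

lemma transport_cost_add:
  "transport_cost V \<delta> (\<lambda>x y. A x y + B x y) = transport_cost V \<delta> A + transport_cost V \<delta> B"
  by (simp add: transport_cost_def distrib_right sum.distrib)

lemma transport_cost_scale:
  "transport_cost V \<delta> (\<lambda>x y. c * A x y) = c * transport_cost V \<delta> A"
  by (simp add: transport_cost_def sum_distrib_left mult.assoc)

lemma transport_cost_eq_const:
  assumes "coupling V m1 m2 A" and "\<And>x y. x \<in> V \<Longrightarrow> y \<in> V \<Longrightarrow> A x y \<noteq> 0 \<Longrightarrow> \<delta> x y = c"
  shows "transport_cost V \<delta> A = c * (\<Sum>x\<in>V. m1 x)"
proof -
  have "transport_cost V \<delta> A = (\<Sum>x\<in>V. \<Sum>y\<in>V. c * A x y)"
    unfolding transport_cost_def using assms(2) by (intro sum.cong refl) (metis mult.commute mult_zero_left)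
  also have "\<dots> = c * (\<Sum>x\<in>V. m1 x)"
    using assms(1) by (simp add: coupling_def sum_distrib_left[symmetric])
  finally show ?thesis .
qed

definition graph_plan :: "'a set \<Rightarrow> ('a \<Rightarrow> 'a) \<Rightarrow> 'a \<Rightarrow> 'a \<Rightarrow> real" where
  "graph_plan P f x y = of_bool (x \<in> P \<and> y = f x)"

lemma coupling_graph_plan:
  assumes "finite V" and f: "bij_betw f P Q" and "P \<subseteq> V" and "Q \<subseteq> V"
  shows "coupling V (\<lambda>x. of_bool (x \<in> P)) (\<lambda>y. of_bool (y \<in> Q)) (graph_plan P f)"
  unfolding coupling_def graph_plan_def
proof (intro conjI ballI)
  fix x assume "x \<in> V"
  show "(\<Sum>y\<in>V. of_bool (x \<in> P \<and> y = f x)) = (of_bool (x \<in> P) :: real)"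
    using assms bij_betw_apply[OF f] by (cases "x \<in> P") (auto simp: subset_iff)
next
  fix y assume "y \<in> V"
  have "{x \<in> V. x \<in> P \<and> y = f x} = (if y \<in> Q then {inv_into P f y} else {})"
    using assms bij_betw_inv_into_right[OF f] bij_betw_inv_into_left[OF f]
      bij_betw_apply[OF bij_betw_inv_into[OF f]] bij_betw_apply[OF f] by auto
  then show "(\<Sum>x\<in>V. of_bool (x \<in> P \<and> y = f x)) = (of_bool (y \<in> Q) :: real)"
    using assms(1) by (simp add: sum.If_cases Int_def)
qed simp

lemma transport_cost_graph_plan:
  assumes "finite V" and "P \<subseteq> V" and "f ` P \<subseteq> V"
  shows "transport_cost V \<delta> (graph_plan P f) = (\<Sum>x\<in>P. \<delta> x (f x))"
proof -
  have "(\<Sum>y\<in>V. graph_plan P f x y * \<delta> x y) = (if x \<in> P then \<delta> x (f x) else 0)" for x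
    using assms by (auto simp: graph_plan_def)
  then show ?thesis
    using assms by (simp add: transport_cost_def sum.If_cases Int_absorb1)
qed

definition cross_plan :: "'i set \<Rightarrow> ('i \<Rightarrow> 'a) \<Rightarrow> ('i \<Rightarrow> 'a) \<Rightarrow> 'a \<Rightarrow> 'a \<Rightarrow> real" where
  "cross_plan S a b x y = of_bool (\<exists>i\<in>S. \<exists>j\<in>S. i \<noteq> j \<and> x = a i \<and> y = b j) / (real (card S) - 1)"

lemma cross_plan_swap: "cross_plan S a b x y = cross_plan S b a y x"
proof -
  have "(\<exists>i\<in>S. \<exists>j\<in>S. i \<noteq> j \<and> x = a i \<and> y = b j) \<longleftrightarrow> (\<exists>i\<in>S. \<exists>j\<in>S. i \<noteq> j \<and> y = b i \<and> x = a j)"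
    by metis
  then show ?thesis by (simp add: cross_plan_def)
qed

lemma sum_cross_plan:
  assumes "finite V" and "finite S" and "2 \<le> card S" and "inj_on a S" and "inj_on b S"
    and "b ` S \<subseteq> V"
  shows "(\<Sum>y\<in>V. cross_plan S a b x y) = of_bool (x \<in> a ` S)"
proof (cases "x \<in> a ` S")
  case True
  then obtain i where i: "i \<in> S" "x = a i" by blast
  have "V \<inter> {y. \<exists>i\<in>S. \<exists>j\<in>S. i \<noteq> j \<and> x = a i \<and> y = b j} = b ` (S - {i})"
  proof (intro equalityI subsetI)
    fix y assume "y \<in> V \<inter> {y. \<exists>i\<in>S. \<exists>j\<in>S. i \<noteq> j \<and> x = a i \<and> y = b j}"
    then obtain i' j where "i' \<in> S" "j \<in> S" "i' \<noteq> j" "a i = a i'" "y = b j"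
      using i by auto
    then show "y \<in> b ` (S - {i})"
      using assms(4) i(1) by (auto dest: inj_onD)
  next
    fix y assume "y \<in> b ` (S - {i})"
    then obtain j where j: "j \<in> S" "i \<noteq> j" "y = b j"
      by blast
    then have "y \<in> V"
      using assms(6) by blast
    with i j show "y \<in> V \<inter> {y. \<exists>i\<in>S. \<exists>j\<in>S. i \<noteq> j \<and> x = a i \<and> y = b j}"
      by auto
  qed
  moreover have "card (b ` (S - {i})) = card S - 1"
    using i assms(2,5) by (simp add: card_image inj_on_diff)
  ultimately show ?thesis
    using True assms(1,3)
    by (simp add: cross_plan_def sum_divide_distrib[symmetric] of_nat_diff)
next
  case False
  then have "cross_plan S a b x y = 0" for y
    by (auto simp: cross_plan_def)
  with False show ?thesis
    by simp
qed

lemma coupling_cross_plan: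
  assumes "finite V" and "finite S" and "2 \<le> card S" and "inj_on a S" and "inj_on b S"
    and "a ` S \<subseteq> V" and "b ` S \<subseteq> V"
  shows "coupling V (\<lambda>x. of_bool (x \<in> a ` S)) (\<lambda>y. of_bool (y \<in> b ` S)) (cross_plan S a b)"
  unfolding coupling_def
proof (intro conjI ballI)
  show "0 \<le> cross_plan S a b x y" for x y
    using assms(3) by (simp add: cross_plan_def)
  show "(\<Sum>y\<in>V. cross_plan S a b x y) = of_bool (x \<in> a ` S)" for x
    using assms by (intro sum_cross_plan)
  show "(\<Sum>x\<in>V. cross_plan S a b x y) = of_bool (y \<in> b ` S)" for y
    unfolding cross_plan_swap[of S a b _ y] using assms by (intro sum_cross_plan)
qed

lemma transport_cost_cross_plan:
  assumes "finite V" and "finite S" and "2 \<le> card S" and "inj_on a S" and "inj_on b S"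
    and "a ` S \<subseteq> V" and "b ` S \<subseteq> V"
    and "\<And>i j. i \<in> S \<Longrightarrow> j \<in> S \<Longrightarrow> i \<noteq> j \<Longrightarrow> \<delta> (a i) (b j) = c"
  shows "transport_cost V \<delta> (cross_plan S a b) = c * real (card S)"
proof -
  have "transport_cost V \<delta> (cross_plan S a b) = c * (\<Sum>x\<in>V. of_bool (x \<in> a ` S))"
    using assms(8) by (intro transport_cost_eq_const[OF coupling_cross_plan[OF assms(1-7)]])
      (auto simp: cross_plan_def)
  also have "(\<Sum>x\<in>V. of_bool (x \<in> a ` S)) = real (card S)"
    using assms(1,4,6) by (simp add: sum.If_cases Int_absorb1 card_image)
  finally show ?thesis .
qed

section \<open>The graph of out-regular digraphs is a Hamming graph\<close>

definition out_nbhds :: "nat \<Rightarrow> nat \<Rightarrow> nat \<Rightarrow> nat set set" where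
  "out_nbhds n d i = {s. s \<subseteq> {0..<n} - {i} \<and> card s = d}"

lemma out_regular_digraphs_iff:
  "G \<in> out_regular_digraphs n d \<longleftrightarrow> (\<forall>i<n. G i \<in> out_nbhds n d i) \<and> (\<forall>i\<ge>n. G i = {})"
  by (auto simp: out_regular_digraphs_def out_nbhds_def)

lemma fun_upd_in_out_regular_digraphs:
  "G \<in> out_regular_digraphs n d \<Longrightarrow> i < n \<Longrightarrow> s \<in> out_nbhds n d i \<Longrightarrow>
    G(i := s) \<in> out_regular_digraphs n d"
  by (auto simp: out_regular_digraphs_iff)

lemma finite_out_regular_digraphs: "finite (out_regular_digraphs n d)"
  by (rule finite_subset[OF _ finite_set_of_finite_funs[of "{..<n}" "Pow {0..<n}" "{}"]])
    (auto simp: out_regular_digraphs_def)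

lemma finite_out_nbhds: "finite (out_nbhds n d i)"
  by (rule finite_subset[of _ "Pow {0..<n}"]) (auto simp: out_nbhds_def)

lemma card_out_nbhds: "i < n \<Longrightarrow> card (out_nbhds n d i) = n - 1 choose d"
  using n_subsets[of "{0..<n} - {i}" d] by (simp add: out_nbhds_def)

lemma choose_ge_1_if_out_regular:
  assumes "G \<in> out_regular_digraphs n d" and "0 < n"
  shows "1 \<le> n - 1 choose d"
proof -
  have "out_nbhds n d 0 \<noteq> {}"
    using assms by (auto simp: out_regular_digraphs_iff)
  then show ?thesis
    using card_out_nbhds[OF assms(2)] finite_out_nbhds[of n d 0]
    by (metis One_nat_def Suc_leI card_gt_0_iff)
qed

definition diff_set :: "('i \<Rightarrow> 'b) \<Rightarrow> ('i \<Rightarrow> 'b) \<Rightarrow> 'i set" where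
  "diff_set x y = {i. x i \<noteq> y i}"

definition hamming :: "('i \<Rightarrow> 'b) \<Rightarrow> ('i \<Rightarrow> 'b) \<Rightarrow> nat" where
  "hamming x y = card (diff_set x y)"

lemma diff_set_commute: "diff_set x y = diff_set y x"
  by (auto simp: diff_set_def)

lemma diff_set_eq_empty_iff: "diff_set x y = {} \<longleftrightarrow> x = y"
  by (auto simp: diff_set_def fun_eq_iff)

lemma diff_set_fun_upd_same: "diff_set (x(j := s)) (y(j := s)) = diff_set x y - {j}"
  by (auto simp: diff_set_def)

lemma hamming_fun_upd: "hamming x (x(j := s)) = (if s = x j then 0 else 1)"
proof -
  have "diff_set x (x(j := s)) = (if s = x j then {} else {j})"
    by (auto simp: diff_set_def)
  then show ?thesis by (simp add: hamming_def)
qed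

lemma hamming_self [simp]: "hamming x x = 0"
  by (simp add: hamming_def diff_set_def)

lemma hamming_eq_0_iff: "finite (diff_set x y) \<Longrightarrow> hamming x y = 0 \<longleftrightarrow> x = y"
  by (simp add: hamming_def diff_set_eq_empty_iff)

lemma hamming_triangle:
  assumes "finite (diff_set x z)" and "finite (diff_set z y)"
  shows "hamming x y \<le> hamming x z + hamming z y"
proof -
  have "hamming x y \<le> card (diff_set x z \<union> diff_set z y)"
    unfolding hamming_def using assms by (intro card_mono) (auto simp: diff_set_def)
  also have "\<dots> \<le> hamming x z + hamming z y"
    unfolding hamming_def by (rule card_Un_le)
  finally show ?thesis .
qed

lemma diff_set_subset_if_out_regular:
  assumes "x \<in> out_regular_digraphs n d" and "y \<in> out_regular_digraphs n d"
  shows "diff_set x y \<subseteq> {..<n}"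
proof
  fix i assume "i \<in> diff_set x y"
  moreover have "x i = y i" if "n \<le> i"
    using assms that by (simp add: out_regular_digraphs_def)
  ultimately show "i \<in> {..<n}"
    unfolding diff_set_def by (meson lessThan_iff mem_Collect_eq not_le)
qed

lemma finite_diff_set_if_out_regular:
  assumes "x \<in> out_regular_digraphs n d" and "y \<in> out_regular_digraphs n d"
  shows "finite (diff_set x y)"
  using diff_set_subset_if_out_regular[OF assms] by (rule finite_subset) simp

lemma adjH_iff_hamming:
  "adjH n d x y \<longleftrightarrow>
    x \<in> out_regular_digraphs n d \<and> y \<in> out_regular_digraphs n d \<and> hamming x y = 1"
proof -
  have "(\<forall>i. i \<noteq> j \<longrightarrow> x i = y i) \<longleftrightarrow> diff_set x y \<subseteq> {j}" for j
    by (auto simp: diff_set_def)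
  then show ?thesis
    by (auto simp: adjH_def hamming_def card_1_singleton_iff subset_singleton_iff
        diff_set_eq_empty_iff[symmetric])
qed

lemma hamming_le_if_relpowp_adjH:
  assumes "(adjH n d ^^ k) x y" and "x \<in> out_regular_digraphs n d" and "y \<in> out_regular_digraphs n d"
  shows "hamming x y \<le> k"
  using assms(1,3)
proof (induction k arbitrary: y)
  case 0
  then show ?case by simp
next
  case (Suc k)
  then obtain z where z: "(adjH n d ^^ k) x z" "adjH n d z y"
    by (blast elim: relpowp_Suc_E)
  then have "z \<in> out_regular_digraphs n d" and "hamming z y = 1"
    by (simp_all add: adjH_iff_hamming)
  with Suc.IH[OF z(1)] Suc.prems(2) show ?case
    using hamming_triangle[of x z y] finite_diff_set_if_out_regular assms(2) by fastforce
qed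

lemma relpowp_adjH_hamming:
  assumes "x \<in> out_regular_digraphs n d" and "y \<in> out_regular_digraphs n d"
  shows "(adjH n d ^^ hamming x y) x y"
  using assms(2)
proof (induction "hamming x y" arbitrary: y)
  case 0
  then show ?case
    using hamming_eq_0_iff finite_diff_set_if_out_regular assms(1) by fastforce
next
  case (Suc k)
  from Suc.hyps(2) obtain j where "j \<in> diff_set x y"
    unfolding hamming_def by (metis card.empty ex_in_conv nat.distinct(1))
  then have j: "x j \<noteq> y j" "j < n"
    using diff_set_subset_if_out_regular[OF assms(1) Suc.prems] by (auto simp: diff_set_def)
  define z where "z = y(j := x j)"
  have z: "z \<in> out_regular_digraphs n d"
    unfolding z_def using assms(1) Suc.prems j(2)
    by (intro fun_upd_in_out_regular_digraphs) (auto simp: out_regular_digraphs_iff)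
  have "diff_set x z = diff_set x y - {j}"
    by (auto simp: diff_set_def z_def)
  then have "k = hamming x z"
    using Suc.hyps(2) \<open>j \<in> diff_set x y\<close> finite_diff_set_if_out_regular[OF assms(1) Suc.prems]
    by (simp add: hamming_def)
  then have "(adjH n d ^^ k) x z"
    using Suc.hyps(1) z by simp
  moreover have "adjH n d z y"
    using z Suc.prems j(1) hamming_fun_upd[of y j "x j"]
    by (simp add: adjH_iff_hamming z_def hamming_def diff_set_commute)
  ultimately have "(adjH n d ^^ Suc k) x y"
    by (rule relpowp_Suc_I[of k "adjH n d" x z y])
  with Suc.hyps(2) show ?case
    by simp
qed

lemma graph_dist_adjH:
  "x \<in> out_regular_digraphs n d \<Longrightarrow> y \<in> out_regular_digraphs n d \<Longrightarrow>
    graph_dist (adjH n d) x y = hamming x y"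
  unfolding graph_dist_def
  by (rule Least_equality) (auto intro: relpowp_adjH_hamming hamming_le_if_relpowp_adjH)

section \<open>Unit balls\<close>

lemma fun_upd_eq_fun_upd_iff:
  assumes "s \<noteq> x j"
  shows "x(j := s) = x(l := t) \<longleftrightarrow> j = l \<and> s = t"
proof
  assume eq: "x(j := s) = x(l := t)"
  then have "j = l"
    using assms fun_upd_apply[of x l t j] by (metis fun_upd_same)
  with eq show "j = l \<and> s = t"
    by (simp add: fun_upd_eqD)
qed simp

definition free_moves :: "nat \<Rightarrow> nat \<Rightarrow> (nat \<Rightarrow> nat set) \<Rightarrow> (nat \<Rightarrow> nat set) \<Rightarrow> (nat \<Rightarrow> nat set) set" where
  "free_moves n d x y = (\<lambda>(j, s). x(j := s)) ` (SIGMA j:{..<n}. out_nbhds n d j - {x j, y j})"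

definition toward_moves :: "('i \<Rightarrow> 'b) \<Rightarrow> ('i \<Rightarrow> 'b) \<Rightarrow> ('i \<Rightarrow> 'b) set" where
  "toward_moves x y = (\<lambda>j. x(j := y j)) ` diff_set x y"

lemma inj_on_free_moves: "inj_on (\<lambda>(j, s). x(j := s)) (SIGMA j:{..<n}. out_nbhds n d j - {x j, y j})"
proof (rule inj_onI)
  fix p q
  assume "p \<in> (SIGMA j:{..<n}. out_nbhds n d j - {x j, y j})"
    and "(\<lambda>(j, s). x(j := s)) p = (\<lambda>(j, s). x(j := s)) q"
  then show "p = q"
    by (cases p; cases q) (simp add: fun_upd_eq_fun_upd_iff)
qed

lemma inj_on_toward_moves: "inj_on (\<lambda>j. x(j := y j)) (diff_set x y)"
  by (rule inj_onI) (simp add: diff_set_def fun_upd_eq_fun_upd_iff)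

lemma toward_moves_subset:
  assumes "x \<in> out_regular_digraphs n d" and "y \<in> out_regular_digraphs n d"
  shows "toward_moves x y \<subseteq> out_regular_digraphs n d"
  using assms diff_set_subset_if_out_regular[OF assms]
  by (auto simp: toward_moves_def out_regular_digraphs_iff)

lemma free_moves_subset:
  "x \<in> out_regular_digraphs n d \<Longrightarrow> free_moves n d x y \<subseteq> out_regular_digraphs n d"
  by (auto simp: free_moves_def intro: fun_upd_in_out_regular_digraphs)

lemma hamming_le_1_iff:
  assumes x: "x \<in> out_regular_digraphs n d" and y: "y \<in> out_regular_digraphs n d"
    and u: "u \<in> out_regular_digraphs n d"
  shows "hamming x u \<le> 1 \<longleftrightarrow> u = x \<or> u \<in> free_moves n d x y \<or> u \<in> toward_moves x y"
proof
  assume "hamming x u \<le> 1"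
  then have "card (diff_set x u) = 0 \<or> card (diff_set x u) = 1"
    by (auto simp: hamming_def)
  then consider "diff_set x u = {}" | j where "diff_set x u = {j}"
    using finite_diff_set_if_out_regular[OF x u] by (auto simp: card_1_singleton_iff)
  then show "u = x \<or> u \<in> free_moves n d x y \<or> u \<in> toward_moves x y"
  proof cases
    case 1
    then show ?thesis by (simp add: diff_set_eq_empty_iff)
  next
    case (2 j)
    then have "x i = u i" if "i \<noteq> j" for i
      using that by (auto simp: diff_set_def)
    then have u_eq: "u = x(j := u j)"
      by (intro ext) simp
    have "u j \<noteq> x j" and "j < n"
      using 2 diff_set_subset_if_out_regular[OF x u] by (auto simp: diff_set_def)
    show ?thesis
    proof (cases "u j = y j")
      case True
      then have "j \<in> diff_set x y"
        using \<open>u j \<noteq> x j\<close> by (simp add: diff_set_def)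
      with u_eq True have "u \<in> toward_moves x y"
        unfolding toward_moves_def by (intro rev_image_eqI[of j]) simp_all
      then show ?thesis by simp
    next
      case False
      have "u j \<in> out_nbhds n d j"
        using u \<open>j < n\<close> by (simp add: out_regular_digraphs_iff)
      with u_eq False \<open>u j \<noteq> x j\<close> \<open>j < n\<close> have "u \<in> free_moves n d x y"
        unfolding free_moves_def by (intro rev_image_eqI[of "(j, u j)"]) simp_all
      then show ?thesis by simp
    qed
  qed
next
  assume "u = x \<or> u \<in> free_moves n d x y \<or> u \<in> toward_moves x y"
  then have "\<exists>j s. u = x(j := s)"
  proof (elim disjE)
    assume "u = x"
    then show ?thesis by (metis fun_upd_triv)
  qed (auto simp: free_moves_def toward_moves_def)
  then show "hamming x u \<le> 1"
    by (auto simp: hamming_fun_upd)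
qed

lemma not_in_free_moves: "x \<notin> free_moves n d x y"
  unfolding free_moves_def by clarsimp (metis fun_upd_same)

lemma not_in_toward_moves: "x \<notin> toward_moves x y"
  unfolding toward_moves_def diff_set_def by clarsimp (metis fun_upd_same)

lemma free_moves_Int_toward_moves: "free_moves n d x y \<inter> toward_moves x y = {}"
proof -
  have "x(j := s) \<noteq> x(l := y l)" if "s \<noteq> x j" and "s \<noteq> y j" for j s l
    using that by (auto simp: fun_upd_eq_fun_upd_iff)
  then show ?thesis
    unfolding free_moves_def toward_moves_def by fastforce
qed

text \<open>On vertices this is the indicator of the closed unit ball around \<open>x\<close>; \<open>y\<close> only determines
  how it is split.\<close>

definition ball_indicator :: "nat \<Rightarrow> nat \<Rightarrow> (nat \<Rightarrow> nat set) \<Rightarrow> (nat \<Rightarrow> nat set) \<Rightarrow> (nat \<Rightarrow> nat set) \<Rightarrow> real" where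
  "ball_indicator n d x y u =
     of_bool (u = x) + of_bool (u \<in> free_moves n d x y) + of_bool (u \<in> toward_moves x y)"

lemma walkH_eq_ball_indicator:
  assumes x: "x \<in> out_regular_digraphs n d" and y: "y \<in> out_regular_digraphs n d"
    and u: "u \<in> out_regular_digraphs n d"
  shows "walkH n d x u = ball_indicator n d x y u / (real n * (real (n - 1 choose d) - 1) + 1)"
proof -
  have "u = x \<or> adjH n d x u \<longleftrightarrow> hamming x u \<le> 1"
    using x u hamming_eq_0_iff[OF finite_diff_set_if_out_regular[OF x u]]
    by (auto simp: adjH_iff_hamming)
  moreover have "ball_indicator n d x y u = of_bool (hamming x u \<le> 1)"
    using hamming_le_1_iff[OF x y u] not_in_free_moves[of x n d y] not_in_toward_moves[of x y]
      free_moves_Int_toward_moves[of n d x y]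
    by (auto simp: ball_indicator_def)
  ultimately show ?thesis
    using x by (simp add: walkH_def)
qed

section \<open>Coupling the unit balls\<close>

definition rebase :: "('i \<Rightarrow> 'b) \<Rightarrow> ('i \<Rightarrow> 'b) \<Rightarrow> ('i \<Rightarrow> 'b) \<Rightarrow> 'i \<Rightarrow> 'b" where
  "rebase x y u = (\<lambda>i. if u i = x i then y i else u i)"

lemma rebase_fun_upd: "s \<noteq> x j \<Longrightarrow> rebase x y (x(j := s)) = y(j := s)"
  by (intro ext) (simp add: rebase_def)

lemma rebase_free_moves:
  assumes "u \<in> free_moves n d x y"
  shows "rebase x y u \<in> free_moves n d y x" and "rebase y x (rebase x y u) = u"
proof -
  obtain j s where "j < n" "s \<in> out_nbhds n d j" "s \<noteq> x j" "s \<noteq> y j" and u: "u = x(j := s)"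
    using assms by (auto simp: free_moves_def)
  then show "rebase x y u \<in> free_moves n d y x" and "rebase y x (rebase x y u) = u"
    unfolding free_moves_def by (auto simp: rebase_fun_upd intro!: rev_image_eqI[of "(j, s)"])
qed

lemma bij_betw_rebase_free_moves:
  "bij_betw (rebase x y) (free_moves n d x y) (free_moves n d y x)"
  by (rule bij_betw_byWitness[where f' = "rebase y x"])
    (auto simp: rebase_free_moves)

lemma sum_free_moves:
  "(\<Sum>u\<in>free_moves n d x y. f u) = (\<Sum>j<n. \<Sum>s\<in>out_nbhds n d j - {x j, y j}. f (x(j := s)))"
  unfolding free_moves_def sum.reindex[OF inj_on_free_moves]
  by (subst sum.Sigma) (auto simp: finite_out_nbhds split_def)

lemma sum_hamming_rebase_free_moves:
  assumes x: "x \<in> out_regular_digraphs n d" and y: "y \<in> out_regular_digraphs n d"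
  defines "k \<equiv> real (hamming x y)" and "D \<equiv> real (n - 1 choose d)"
  shows "(\<Sum>u\<in>free_moves n d x y. real (hamming u (rebase x y u)))
    = k * (D - 2) * (k - 1) + (real n - k) * (D - 1) * k"
proof -
  let ?S = "diff_set x y"
  have fin: "finite ?S" and sub: "?S \<subseteq> {..<n}"
    using finite_diff_set_if_out_regular[OF x y] diff_set_subset_if_out_regular[OF x y] .
  have row: "(\<Sum>s\<in>out_nbhds n d j - {x j, y j}. real (hamming (x(j := s)) (rebase x y (x(j := s)))))
      = (if j \<in> ?S then (D - 2) * (k - 1) else (D - 1) * k)" if "j < n" for j
  proof -
    have "hamming (x(j := s)) (rebase x y (x(j := s))) = card (?S - {j})" if "s \<noteq> x j" for s
      using that by (simp add: rebase_fun_upd hamming_def diff_set_fun_upd_same)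
    then have sum_eq: "(\<Sum>s\<in>out_nbhds n d j - {x j, y j}. real (hamming (x(j := s)) (rebase x y (x(j := s)))))
        = real (card (out_nbhds n d j - {x j, y j})) * real (card (?S - {j}))"
      by simp
    have sub_j: "{x j, y j} \<subseteq> out_nbhds n d j"
      using x y \<open>j < n\<close> by (simp add: out_regular_digraphs_iff)
    then have "card {x j, y j} \<le> n - 1 choose d"
      using card_mono[OF finite_out_nbhds sub_j] card_out_nbhds[OF \<open>j < n\<close>] by simp
    then have card_out: "real (card (out_nbhds n d j - {x j, y j})) = D - real (card {x j, y j})"
      using sub_j by (simp add: D_def card_Diff_subset finite_out_nbhds card_out_nbhds \<open>j < n\<close> of_nat_diff)
    show ?thesis
    proof (cases "j \<in> ?S")
      case True
      then have "x j \<noteq> y j" and "1 \<le> card ?S"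
        using fin by (auto simp: diff_set_def card_gt_0_iff Suc_le_eq)
      with True show ?thesis
        unfolding sum_eq card_out by (simp add: k_def hamming_def of_nat_diff)
    next
      case False
      then have "x j = y j"
        by (simp add: diff_set_def)
      with False show ?thesis
        unfolding sum_eq card_out by (simp add: k_def hamming_def)
    qed
  qed
  have "card ({..<n} \<inter> - ?S) = n - card ?S"
    using sub fin by (simp add: Diff_eq[symmetric] card_Diff_subset)
  then have "(\<Sum>j<n. if j \<in> ?S then (D - 2) * (k - 1) else (D - 1) * k)
      = k * (D - 2) * (k - 1) + (real n - k) * (D - 1) * k"
    using sub fin card_mono[OF _ sub]
    by (simp add: sum.If_cases Int_absorb1 k_def hamming_def of_nat_diff Collect_mem_eq)
  with row show ?thesis
    by (simp add: sum_free_moves)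
qed

lemma hamming_swap_pair:
  assumes "finite (diff_set x y)" and "i \<in> diff_set x y" and "j \<in> diff_set x y" and "i \<noteq> j"
  shows "hamming (x(i := y i)) (y(j := x j)) = hamming x y - 2"
proof -
  have "diff_set (x(i := y i)) (y(j := x j)) = diff_set x y - {i, j}"
    using assms(4) by (auto simp: diff_set_def)
  then show ?thesis
    using assms by (simp add: hamming_def card_Diff_subset)
qed

lemma coupling_ball_indicator_far:
  assumes x: "x \<in> out_regular_digraphs n d" and y: "y \<in> out_regular_digraphs n d"
    and far: "2 \<le> hamming x y"
  obtains A where "coupling (out_regular_digraphs n d) (ball_indicator n d x y) (ball_indicator n d y x) A"
    and "transport_cost (out_regular_digraphs n d) (\<lambda>u v. real (hamming u v)) A
      = real (hamming x y) * (real n - 1) * (real (n - 1 choose d) - 1)"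
proof
  let ?V = "out_regular_digraphs n d" and ?S = "diff_set x y"
  let ?a = "\<lambda>j. x(j := y j)" and ?b = "\<lambda>j. y(j := x j)"
  define A where "A = (\<lambda>u v. graph_plan {x} (\<lambda>_. y) u v + graph_plan (free_moves n d x y) (rebase x y) u v
    + cross_plan ?S ?a ?b u v)"
  have fin: "finite ?V" "finite ?S"
    using finite_out_regular_digraphs finite_diff_set_if_out_regular[OF x y] .
  have card_S: "2 \<le> card ?S"
    using far by (simp add: hamming_def)
  have inj: "inj_on ?a ?S" "inj_on ?b ?S"
    using inj_on_toward_moves[of x y] inj_on_toward_moves[of y x] by (simp_all add: diff_set_commute)
  have sub: "?a ` ?S \<subseteq> ?V" "?b ` ?S \<subseteq> ?V"
    using toward_moves_subset[OF x y] toward_moves_subset[OF y x]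
    by (simp_all add: toward_moves_def diff_set_commute)
  have "ball_indicator n d x y = (\<lambda>u. of_bool (u \<in> {x}) + of_bool (u \<in> free_moves n d x y) + of_bool (u \<in> ?a ` ?S))"
    and "ball_indicator n d y x = (\<lambda>v. of_bool (v \<in> {y}) + of_bool (v \<in> free_moves n d y x) + of_bool (v \<in> ?b ` ?S))"
    by (simp_all add: fun_eq_iff ball_indicator_def toward_moves_def diff_set_commute)
  moreover have "coupling ?V
      (\<lambda>u. of_bool (u \<in> {x}) + of_bool (u \<in> free_moves n d x y) + of_bool (u \<in> ?a ` ?S))
      (\<lambda>v. of_bool (v \<in> {y}) + of_bool (v \<in> free_moves n d y x) + of_bool (v \<in> ?b ` ?S)) A"
    unfolding A_def
    using fin card_S inj sub x y free_moves_subset[OF x] free_moves_subset[OF y]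
    by (intro coupling_add coupling_graph_plan coupling_cross_plan bij_betw_rebase_free_moves)
      (auto simp: bij_betw_def)
  ultimately show "coupling ?V (ball_indicator n d x y) (ball_indicator n d y x) A"
    by simp
  have "transport_cost ?V (\<lambda>u v. real (hamming u v)) (graph_plan {x} (\<lambda>_. y)) = real (hamming x y)"
    using fin x y by (simp add: transport_cost_graph_plan)
  moreover have "transport_cost ?V (\<lambda>u v. real (hamming u v)) (graph_plan (free_moves n d x y) (rebase x y))
      = (\<Sum>u\<in>free_moves n d x y. real (hamming u (rebase x y u)))"
    using fin free_moves_subset[OF x] free_moves_subset[OF y]
      bij_betw_imp_surj_on[OF bij_betw_rebase_free_moves]
    by (simp add: transport_cost_graph_plan)
  moreover have "transport_cost ?V (\<lambda>u v. real (hamming u v)) (cross_plan ?S ?a ?b)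
      = (real (hamming x y) - 2) * real (hamming x y)"
  proof -
    have "real (hamming (?a i) (?b j)) = real (hamming x y) - 2" if "i \<in> ?S" "j \<in> ?S" "i \<noteq> j" for i j
      using hamming_swap_pair[OF fin(2) that] far by (simp add: of_nat_diff)
    then have "transport_cost ?V (\<lambda>u v. real (hamming u v)) (cross_plan ?S ?a ?b)
        = (real (hamming x y) - 2) * real (card ?S)"
      using fin card_S inj sub by (intro transport_cost_cross_plan)
    then show ?thesis
      by (simp add: hamming_def)
  qed
  ultimately show "transport_cost ?V (\<lambda>u v. real (hamming u v)) A
      = real (hamming x y) * (real n - 1) * (real (n - 1 choose d) - 1)"
    unfolding A_def transport_cost_add
    by (simp add: sum_hamming_rebase_free_moves[OF x y] algebra_simps)
qed

lemma coupling_ball_indicator_adjacent: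
  assumes x: "x \<in> out_regular_digraphs n d" and y: "y \<in> out_regular_digraphs n d"
    and adj: "hamming x y = 1"
  obtains A where "coupling (out_regular_digraphs n d) (ball_indicator n d x y) (ball_indicator n d y x) A"
    and "transport_cost (out_regular_digraphs n d) (\<lambda>u v. real (hamming u v)) A
      = real (hamming x y) * (real n - 1) * (real (n - 1 choose d) - 1)"
proof
  let ?V = "out_regular_digraphs n d"
  obtain j where j: "diff_set x y = {j}"
    using adj by (auto simp: hamming_def card_1_singleton_iff)
  then have "x i = y i" if "i \<noteq> j" for i
    using that by (auto simp: diff_set_def)
  then have "x(j := y j) = y" and "y(j := x j) = x"
    by (simp_all add: fun_eq_iff)
  with j have toward: "toward_moves x y = {y}" "toward_moves y x = {x}"
    by (simp_all add: toward_moves_def diff_set_commute[of y x])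
  define A where "A = (\<lambda>u v. graph_plan {x} (\<lambda>_. x) u v + graph_plan {y} (\<lambda>_. y) u v
    + graph_plan (free_moves n d x y) (rebase x y) u v)"
  have "ball_indicator n d x y = (\<lambda>u. of_bool (u \<in> {x}) + of_bool (u \<in> {y}) + of_bool (u \<in> free_moves n d x y))"
    and "ball_indicator n d y x = (\<lambda>v. of_bool (v \<in> {x}) + of_bool (v \<in> {y}) + of_bool (v \<in> free_moves n d y x))"
    by (simp_all add: fun_eq_iff ball_indicator_def toward add_ac)
  moreover have "coupling ?V
      (\<lambda>u. of_bool (u \<in> {x}) + of_bool (u \<in> {y}) + of_bool (u \<in> free_moves n d x y))
      (\<lambda>v. of_bool (v \<in> {x}) + of_bool (v \<in> {y}) + of_bool (v \<in> free_moves n d y x)) A"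
    unfolding A_def
    using finite_out_regular_digraphs x y free_moves_subset[OF x] free_moves_subset[OF y]
    by (intro coupling_add coupling_graph_plan bij_betw_rebase_free_moves) (auto simp: bij_betw_def)
  ultimately show "coupling ?V (ball_indicator n d x y) (ball_indicator n d y x) A"
    by simp
  show "transport_cost ?V (\<lambda>u v. real (hamming u v)) A
      = real (hamming x y) * (real n - 1) * (real (n - 1 choose d) - 1)"
    unfolding A_def transport_cost_add
    using finite_out_regular_digraphs x y free_moves_subset[OF x] free_moves_subset[OF y]
      bij_betw_imp_surj_on[OF bij_betw_rebase_free_moves]
    by (simp add: transport_cost_graph_plan sum_hamming_rebase_free_moves[OF x y] adj)
qed

lemma transport_dist_walkH_le:
  assumes x: "x \<in> out_regular_digraphs n d" and y: "y \<in> out_regular_digraphs n d" and "x \<noteq> y"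
  shows "transport_dist (out_regular_digraphs n d) (\<lambda>u v. real (graph_dist (adjH n d) u v))
      (walkH n d x) (walkH n d y)
    \<le> real (hamming x y) * (real n - 1) * (real (n - 1 choose d) - 1)
      / (real n * (real (n - 1 choose d) - 1) + 1)"
proof -
  let ?V = "out_regular_digraphs n d" and ?N = "real n * (real (n - 1 choose d) - 1) + 1"
  have "hamming x y \<noteq> 0"
    using \<open>x \<noteq> y\<close> hamming_eq_0_iff[OF finite_diff_set_if_out_regular[OF x y]] by simp
  then consider "hamming x y = 1" | "2 \<le> hamming x y"
    by linarith
  then obtain A where A: "coupling ?V (ball_indicator n d x y) (ball_indicator n d y x) A"
    and cost: "transport_cost ?V (\<lambda>u v. real (hamming u v)) A
      = real (hamming x y) * (real n - 1) * (real (n - 1 choose d) - 1)"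
    using coupling_ball_indicator_adjacent[OF x y] coupling_ball_indicator_far[OF x y] by cases blast+
  have "0 < n"
    using \<open>x \<noteq> y\<close> diff_set_subset_if_out_regular[OF x y] diff_set_eq_empty_iff[of x y] by auto
  then have "1 \<le> real (n - 1 choose d)"
    using choose_ge_1_if_out_regular[OF x] by simp
  then have "0 < ?N"
    by (intro add_nonneg_pos mult_nonneg_nonneg) simp_all
  then have "coupling ?V (walkH n d x) (walkH n d y) (\<lambda>u v. 1 / ?N * A u v)"
    by (intro coupling_cong[OF coupling_scale[OF A]])
      (simp_all add: walkH_eq_ball_indicator[OF x y] walkH_eq_ball_indicator[OF y x])
  then have "transport_dist ?V (\<lambda>u v. real (graph_dist (adjH n d) u v)) (walkH n d x) (walkH n d y)
      \<le> transport_cost ?V (\<lambda>u v. real (graph_dist (adjH n d) u v)) (\<lambda>u v. 1 / ?N * A u v)"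
    by (rule transport_dist_le_cost) simp
  also have "\<dots> = 1 / ?N * transport_cost ?V (\<lambda>u v. real (hamming u v)) A"
    unfolding transport_cost_scale by (simp add: transport_cost_def graph_dist_adjH cong: sum.cong)
  finally show ?thesis
    using cost by simp
qed

lemma ratio_le_one_minus_inverse:
  fixes m t :: real
  assumes "1 \<le> m" and "0 \<le> t"
  shows "(m - 1) * t / (m * t + 1) \<le> 1 - 1 / m"
proof -
  have "0 < m * t + 1"
    using assms by (simp add: add_nonneg_pos)
  moreover have "(m - 1) * t * m \<le> (m - 1) * (m * t + 1)"
    using assms by (simp add: algebra_simps)
  ultimately show ?thesis
    using assms by (simp add: field_simps)
qed

theorem mainTheorem8:
  fixes n d :: nat and G1 G2 :: "nat \<Rightarrow> nat set"
  assumes "3 \<le> n" and "1 \<le> d" and "d \<le> n - 2"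
    and "G1 \<in> out_regular_digraphs n d" and "G2 \<in> out_regular_digraphs n d"
    and "G1 \<noteq> G2"
  shows "ollivier_ricci (out_regular_digraphs n d) (adjH n d) (walkH n d) G1 G2 \<ge> 1 / real n"
proof -
  let ?W = "transport_dist (out_regular_digraphs n d) (\<lambda>u v. real (graph_dist (adjH n d) u v))
    (walkH n d G1) (walkH n d G2)"
  let ?k = "real (hamming G1 G2)" and ?D = "real (n - 1 choose d)"
  have "0 < ?k"
    using assms(6) hamming_eq_0_iff[OF finite_diff_set_if_out_regular[OF assms(4,5)]] by simp
  have "1 \<le> ?D"
    using choose_ge_1_if_out_regular[OF assms(4)] assms(1) by simp
  have "?W / ?k \<le> (real n - 1) * (?D - 1) / (real n * (?D - 1) + 1)"
    using transport_dist_walkH_le[OF assms(4-6)] \<open>0 < ?k\<close>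
    by (simp add: pos_divide_le_eq mult_ac)
  also have "\<dots> \<le> 1 - 1 / real n"
    using assms(1) \<open>1 \<le> ?D\<close> by (intro ratio_le_one_minus_inverse) simp_all
  finally show ?thesis
    unfolding ollivier_ricci_def graph_dist_adjH[OF assms(4,5)] by simp
qed

end
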